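(* Let $G$ be a finite connected graph and let $2\le k<|V|$. Then the $k$-node CIS relationship graph $G^{(k)}=(C^{(k)},R^{(k)})$ is connected.
   Context: Let $G=(V,E,L)$ be a finite undirected graph with node set $V$, edge set $E$ (unordered pairs of distinct nodes) and a set $L$ of edge labels $l_{i,j}$ attached to edges $(i,j)\in E$ (labels play no role for connectivity). For $V'\subseteq V$, the induced subgraph on $V'$ has node set $V'$ and edge set $\{(i,j)\in E: i,j\in V'\}$ (with the corresponding labels). A $k$-node CIS (connected induced subgraph) is an induced subgraph on a $k$-element set $V'\subseteq V$ that is connected; $C^{(k)}$ denotes the set of all $k$-node CISes of $G$. The $k$-node CIS relationship graph $G^{(k)}=(C^{(k)},R^{(k)})$ is the simple undirected graph whose nodes are the elements of $C^{(k)}$, where two distinct CISes $s_1,s_2\in C^{(k)}$ are adjacent iff their node sets share exactly $k-1$ nodes. *)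

theory Defs
  imports Main
begin

definition simple_graph :: "'a set \<Rightarrow> 'a set set \<Rightarrow> bool" where
  "simple_graph V E \<longleftrightarrow> (\<forall>e\<in>E. e \<subseteq> V \<and> card e = 2)"

definition connected_rel :: "'b set \<Rightarrow> ('b \<Rightarrow> 'b \<Rightarrow> bool) \<Rightarrow> bool" where
  "connected_rel W adj \<longleftrightarrow> W \<noteq> {} \<and>
     (\<forall>x\<in>W. \<forall>y\<in>W. (x, y) \<in> {(u, v). u \<in> W \<and> v \<in> W \<and> adj u v}\<^sup>*)"

definition induced_edges :: "'a set set \<Rightarrow> 'a set \<Rightarrow> 'a set set" where
  "induced_edges E S = {e \<in> E. e \<subseteq> S}"

definition graph_connected :: "'a set \<Rightarrow> 'a set set \<Rightarrow> bool" where
  "graph_connected V E \<longleftrightarrow> connected_rel V (\<lambda>u v. {u, v} \<in> E)"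

definition is_CIS :: "'a set \<Rightarrow> 'a set set \<Rightarrow> 'a set \<Rightarrow> bool" where
  "is_CIS V E S \<longleftrightarrow> S \<subseteq> V \<and> graph_connected S (induced_edges E S)"

text \<open>C^(k): node sets of all k-node CISes (an induced subgraph is determined by its node set).\<close>
definition CIS_set :: "'a set \<Rightarrow> 'a set set \<Rightarrow> nat \<Rightarrow> 'a set set" where
  "CIS_set V E k = {S. is_CIS V E S \<and> card S = k}"

definition CIS_adj :: "nat \<Rightarrow> 'a set \<Rightarrow> 'a set \<Rightarrow> bool" where
  "CIS_adj k S1 S2 \<longleftrightarrow> S1 \<noteq> S2 \<and> card (S1 \<inter> S2) = k - 1"

end

theory Submission imports Defs begin

(* Induct on a connected vertex set U containing the CISes in question. Every connected graph
   on at least two vertices has a non-cut vertex u; it then suffices to link each k-CIS A of U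
   to one inside U - {u}, and the induction hypothesis for U - {u} finishes the job.
   To push A off u, grow a connected core Q \<subseteq> A - {u} by one neighbour inside U - {u} at a time;
   when that neighbour lies outside A, swap it in for a non-cut vertex of A outside Q, which is
   one edge of G^(k). As |Q| < k, this only stops once u itself has been swapped out. *)

definition induced_adj :: "'a set set \<Rightarrow> 'a set \<Rightarrow> ('a \<times> 'a) set" where
  "induced_adj E S = {(u, v). u \<in> S \<and> v \<in> S \<and> {u, v} \<in> E}"

definition induced_connected :: "'a set set \<Rightarrow> 'a set \<Rightarrow> bool" where
  "induced_connected E S \<longleftrightarrow> S \<noteq> {} \<and> (\<forall>x\<in>S. \<forall>y\<in>S. (x, y) \<in> (induced_adj E S)\<^sup>*)"

definition component :: "'a set set \<Rightarrow> 'a set \<Rightarrow> 'a \<Rightarrow> 'a set" where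
  "component E S a = {b \<in> S. (a, b) \<in> (induced_adj E S)\<^sup>*}"

lemma graph_connected_iff_induced_connected: "graph_connected S E \<longleftrightarrow> induced_connected E S"
  by (simp add: graph_connected_def connected_rel_def induced_connected_def induced_adj_def)

lemma induced_adj_induced_edges: "induced_adj (induced_edges E S) S = induced_adj E S"
  by (auto simp: induced_adj_def induced_edges_def)

lemma sym_induced_adj: "sym (induced_adj E S)"
  by (auto simp: sym_def induced_adj_def insert_commute)

lemma induced_reach_sym: "(x, y) \<in> (induced_adj E S)\<^sup>* \<Longrightarrow> (y, x) \<in> (induced_adj E S)\<^sup>*"
  using sym_rtrancl[OF sym_induced_adj] by (rule symD)

lemma induced_reach_mono:
  "S \<subseteq> T \<Longrightarrow> (x, y) \<in> (induced_adj E S)\<^sup>* \<Longrightarrow> (x, y) \<in> (induced_adj E T)\<^sup>*"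
  using rtrancl_mono[of "induced_adj E S" "induced_adj E T"] by (auto simp: induced_adj_def)

lemma induced_reach_edge:
  "u \<in> S \<Longrightarrow> v \<in> S \<Longrightarrow> {u, v} \<in> E \<Longrightarrow> (u, v) \<in> (induced_adj E S)\<^sup>*"
  by (auto simp: induced_adj_def)

lemma induced_reach_in_set: "(x, y) \<in> (induced_adj E S)\<^sup>* \<Longrightarrow> x = y \<or> y \<in> S"
  by (induction rule: rtrancl_induct) (auto simp: induced_adj_def)

lemma induced_connectedI:
  assumes "a \<in> S" "\<And>y. y \<in> S \<Longrightarrow> (y, a) \<in> (induced_adj E S)\<^sup>*"
  shows "induced_connected E S"
  unfolding induced_connected_def
  using assms by (blast intro: induced_reach_sym rtrancl_trans)

lemma induced_connectedD:
  "induced_connected E S \<Longrightarrow> x \<in> S \<Longrightarrow> y \<in> S \<Longrightarrow> (x, y) \<in> (induced_adj E S)\<^sup>*"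
  by (auto simp: induced_connected_def)

lemma induced_connected_singleton: "induced_connected E {x}"
  by (simp add: induced_connected_def)

lemma induced_connected_insert:
  assumes "induced_connected E S" "u \<in> S" "{u, v} \<in> E"
  shows "induced_connected E (insert v S)"
proof (rule induced_connectedI[of u])
  fix y assume "y \<in> insert v S"
  then show "(y, u) \<in> (induced_adj E (insert v S))\<^sup>*"
  proof
    assume "y = v"
    then show ?thesis
      using assms(2,3) by (auto intro: induced_reach_edge simp: insert_commute)
  next
    assume "y \<in> S"
    then show ?thesis
      using assms(1,2) by (blast intro: induced_reach_mono induced_connectedD)
  qed
qed (use assms(2) in simp)

lemma component_subset: "component E S a \<subseteq> S"
  by (auto simp: component_def)

lemma self_mem_component: "a \<in> S \<Longrightarrow> a \<in> component E S a"
  by (simp add: component_def)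

lemma component_eq:
  assumes "b \<in> component E S a"
  shows "component E S b = component E S a"
  using assms unfolding component_def
  by (blast intro: rtrancl_trans induced_reach_sym)

lemma components_disjoint:
  assumes "b \<in> S" "b \<notin> component E S a"
  shows "component E S a \<inter> component E S b = {}"
proof (rule equals0I)
  fix x assume "x \<in> component E S a \<inter> component E S b"
  then have "component E S x = component E S a" "component E S x = component E S b"
    by (simp_all add: component_eq)
  with assms self_mem_component[of b S E] show False by simp
qed

lemma induced_reach_within_component:
  assumes "a \<in> S" "(a, b) \<in> (induced_adj E S)\<^sup>*"
  shows "(a, b) \<in> (induced_adj E (component E S a))\<^sup>*"
  using assms(2)
proof (induction rule: rtrancl_induct)
  case (step y z)
  then have "(a, z) \<in> (induced_adj E S)\<^sup>*" by simp
  with step have "(y, z) \<in> induced_adj E (component E S a)"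
    by (auto simp: induced_adj_def component_def)
  with step.IH show ?case by simp
qed simp

lemma induced_connected_iff_component:
  "a \<in> S \<Longrightarrow> induced_connected E S \<longleftrightarrow> component E S a = S"
  unfolding induced_connected_def component_def
  by (blast intro: rtrancl_trans induced_reach_sym)

lemma induced_connected_subset_component:
  assumes "induced_connected E S" "S \<subseteq> T" "s \<in> S"
  shows "S \<subseteq> component E T s"
  using assms induced_reach_mono[OF assms(2)] by (auto simp: component_def induced_connectedD)

lemma induced_reach_last_edge:
  assumes "x \<in> S" "x \<noteq> w" "(x, w) \<in> (induced_adj E S)\<^sup>*"
  obtains w' where "w' \<in> S - {w}" "{w', w} \<in> E" "(x, w') \<in> (induced_adj E (S - {w}))\<^sup>*"
proof -
  have "(x, y) \<in> (induced_adj E (S - {w}))\<^sup>* \<or>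
    (\<exists>w'\<in>S - {w}. {w', w} \<in> E \<and> (x, w') \<in> (induced_adj E (S - {w}))\<^sup>*)"
    if "(x, y) \<in> (induced_adj E S)\<^sup>*" for y
    using that
  proof (induction rule: rtrancl_induct)
    case (step y z)
    show ?case
    proof (cases "(x, y) \<in> (induced_adj E (S - {w}))\<^sup>*")
      case reach: True
      have "y \<in> S - {w}"
        using induced_reach_in_set[OF reach] assms(1,2) by auto
      moreover have "z \<in> S" "{y, z} \<in> E"
        using step.hyps(2) by (simp_all add: induced_adj_def)
      ultimately show ?thesis
        using reach by (cases "z = w") (auto simp: induced_adj_def intro: rtrancl_into_rtrancl)
    next
      case False
      with step.IH show ?thesis by simp
    qed
  qed simp
  moreover have "(x, w) \<notin> (induced_adj E (S - {w}))\<^sup>*"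
    using induced_reach_in_set assms(2) by fastforce
  ultimately show thesis
    using assms(3) that by blast
qed

lemma induced_reach_through_component:
  assumes "induced_connected E T" "w \<in> T" "y \<in> T - {w}"
  shows "(y, w) \<in> (induced_adj E (insert w (component E (T - {w}) y)))\<^sup>*"
proof -
  define C where "C = component E (T - {w}) y"
  have y: "y \<in> T" "y \<noteq> w" using assms(3) by auto
  obtain w' where w': "w' \<in> T - {w}" "{w', w} \<in> E" "(y, w') \<in> (induced_adj E (T - {w}))\<^sup>*"
    using induced_reach_last_edge[OF y induced_connectedD[OF assms(1) y(1) assms(2)]] .
  have "(y, w') \<in> (induced_adj E (insert w C))\<^sup>*"
    using induced_reach_within_component[OF assms(3) w'(3)] induced_reach_mono[of C "insert w C"]
    unfolding C_def by blast
  moreover have "(w', w) \<in> (induced_adj E (insert w C))\<^sup>*"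
    using w' by (intro induced_reach_edge) (auto simp: C_def component_def)
  ultimately show ?thesis
    unfolding C_def by (rule rtrancl_trans)
qed

lemma induced_connected_insert_component:
  assumes "induced_connected E T" "w \<in> T" "c \<in> T - {w}"
  shows "induced_connected E (insert w (component E (T - {w}) c))"
proof (rule induced_connectedI[of w])
  fix z assume z: "z \<in> insert w (component E (T - {w}) c)"
  show "(z, w) \<in> (induced_adj E (insert w (component E (T - {w}) c)))\<^sup>*"
  proof (cases "z = w")
    case False
    with z have "z \<in> component E (T - {w}) c" by simp
    then show ?thesis
      using induced_reach_through_component[OF assms(1,2)] component_eq component_subset
      by (metis subsetD)
  qed simp
qed simp

lemma induced_connected_exit_edge:
  assumes "induced_connected E U" "A \<subseteq> U" "a \<in> A" "b \<in> U - A"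
  obtains u v where "u \<in> A" "v \<in> U - A" "{u, v} \<in> E"
proof -
  have "y \<in> A \<or> (\<exists>u\<in>A. \<exists>v\<in>U - A. {u, v} \<in> E)" if "(a, y) \<in> (induced_adj E U)\<^sup>*" for y
    using that
  proof (induction rule: rtrancl_induct)
    case (step y z)
    then show ?case by (auto simp: induced_adj_def)
  qed (use assms(3) in simp)
  then show thesis
    using that induced_connectedD[OF assms(1)] assms by blast
qed

lemma induced_connected_Diff_in_component:
  assumes "induced_connected E T" "w \<in> T" "c \<in> T - {w}"
    and "u \<in> component E (T - {w}) c"
    and "induced_connected E (insert w (component E (T - {w}) c) - {u})"
  shows "induced_connected E (T - {u})"
proof -
  define C where "C = component E (T - {w}) c"
  have CT: "C \<subseteq> T - {w}" by (simp add: C_def component_subset)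
  have u: "u \<in> C" "u \<noteq> w" using assms(4) CT by (auto simp: C_def)
  show ?thesis
  proof (rule induced_connectedI[of w])
    fix y assume y: "y \<in> T - {u}"
    show "(y, w) \<in> (induced_adj E (T - {u}))\<^sup>*"
    proof (cases "y \<in> insert w C")
      case True
      with y u(2) have "(y, w) \<in> (induced_adj E (insert w C - {u}))\<^sup>*"
        by (intro induced_connectedD[OF assms(5)[folded C_def]]) auto
      moreover have "insert w C - {u} \<subseteq> T - {u}" using CT assms(2) by blast
      ultimately show ?thesis by (rule induced_reach_mono[rotated])
    next
      case False
      with y have yTw: "y \<in> T - {w}" "y \<notin> C" by auto
      then have "C \<inter> component E (T - {w}) y = {}"
        unfolding C_def by (rule components_disjoint)
      then have "insert w (component E (T - {w}) y) \<subseteq> T - {u}"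
        using u assms(2) component_subset[of E "T - {w}" y] by blast
      then show ?thesis
        using induced_reach_through_component[OF assms(1,2) yTw(1)] by (rule induced_reach_mono)
    qed
  qed (use assms(2) u in auto)
qed

(* If w \<notin> S is a cut vertex, a component C of T - {w} missing S yields the smaller
   instance insert w C with S := {w}. *)
lemma exists_non_cut_vertex:
  assumes "finite T" "induced_connected E T" "induced_connected E S" "S \<subset> T"
  shows "\<exists>u\<in>T - S. induced_connected E (T - {u})"
  using assms
proof (induction "card T" arbitrary: T S rule: less_induct)
  case less
  obtain w where w: "w \<in> T" "w \<notin> S" using less.prems(4) by blast
  show ?case
  proof (cases "induced_connected E (T - {w})")
    case False
    obtain s where s: "s \<in> S" using less.prems(3) by (auto simp: induced_connected_def)
    have sT: "s \<in> T - {w}" using s w less.prems(4) by blast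
    have S_sub: "S \<subseteq> component E (T - {w}) s"
      using less.prems(4) w(2) by (intro induced_connected_subset_component[OF less.prems(3) _ s]) blast
    have "component E (T - {w}) s \<noteq> T - {w}"
      using False induced_connected_iff_component[OF sT] by simp
    then obtain c where c: "c \<in> T - {w}" "c \<notin> component E (T - {w}) s"
      using component_subset[of E "T - {w}" s] by blast
    define C where "C = component E (T - {w}) c"
    have CT: "C \<subseteq> T - {w}" by (simp add: C_def component_subset)
    have C_S: "C \<inter> S = {}"
      using components_disjoint[OF c] S_sub unfolding C_def by blast
    have D_conn: "induced_connected E (insert w C)"
      unfolding C_def by (rule induced_connected_insert_component[OF less.prems(2) w(1) c(1)])
    have "s \<notin> insert w C" using s w(2) C_S by blast
    then have D_T: "insert w C \<subset> T" using CT w(1) sT by (intro psubsetI) auto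
    then have D_card: "card (insert w C) < card T" by (rule psubset_card_mono[OF less.prems(1)])
    have D_fin: "finite (insert w C)"
      by (rule finite_subset[OF psubset_imp_subset[OF D_T] less.prems(1)])
    have "c \<in> C" using c(1) unfolding C_def by (rule self_mem_component)
    then have "{w} \<subset> insert w C" using c(1) by auto
    moreover have "induced_connected E {w}" by (rule induced_connected_singleton)
    ultimately obtain u where "u \<in> insert w C - {w}" and u_conn: "induced_connected E (insert w C - {u})"
      using less.hyps[OF D_card D_fin D_conn] by blast
    then have u: "u \<in> C" by simp
    have "induced_connected E (T - {u})"
      by (rule induced_connected_Diff_in_component[OF less.prems(2) w(1) c(1)
            u[unfolded C_def] u_conn[unfolded C_def]])
    then show ?thesis using u CT C_S by blast
  qed (use w in blast)
qed

lemma exists_induced_connected_subset_card: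
  assumes "finite U" "induced_connected E U" "0 < k" "k \<le> card U"
  shows "\<exists>S\<subseteq>U. induced_connected E S \<and> card S = k"
  using assms(3,4)
proof (induction k)
  case (Suc k)
  show ?case
  proof (cases "k = 0")
    case True
    obtain v where "v \<in> U" using assms(2) by (auto simp: induced_connected_def)
    then have "{v} \<subseteq> U" "card {v} = Suc k" using True by simp_all
    with induced_connected_singleton[of E v] show ?thesis by blast
  next
    case False
    with Suc obtain S where S: "S \<subseteq> U" "induced_connected E S" "card S = k" by auto
    obtain s where s: "s \<in> S" using S(2) by (auto simp: induced_connected_def)
    have "S \<noteq> U" using S(3) Suc.prems(2) by auto
    then obtain b where "b \<in> U - S" using S(1) by blast
    then obtain u v where uv: "u \<in> S" "v \<in> U - S" "{u, v} \<in> E"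
      by (rule induced_connected_exit_edge[OF assms(2) S(1) s])
    have "finite S" using S(1) assms(1) by (rule finite_subset)
    then have "card (insert v S) = Suc k" using S(3) uv(2) by simp
    moreover have "insert v S \<subseteq> U" using S(1) uv(2) by blast
    moreover have "induced_connected E (insert v S)"
      by (rule induced_connected_insert[OF S(2) uv(1,3)])
    ultimately show ?thesis by blast
  qed
qed simp

definition CIS_rel :: "'a set \<Rightarrow> 'a set set \<Rightarrow> nat \<Rightarrow> ('a set \<times> 'a set) set" where
  "CIS_rel V E k = {(S1, S2). S1 \<in> CIS_set V E k \<and> S2 \<in> CIS_set V E k \<and> CIS_adj k S1 S2}"

lemma mem_CIS_set: "S \<in> CIS_set V E k \<longleftrightarrow> S \<subseteq> V \<and> induced_connected E S \<and> card S = k"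
proof -
  have "graph_connected S (induced_edges E S) \<longleftrightarrow> induced_connected E S"
    unfolding graph_connected_iff_induced_connected induced_connected_def induced_adj_induced_edges ..
  then show ?thesis by (simp add: CIS_set_def is_CIS_def)
qed

lemma sym_CIS_rel: "sym (CIS_rel V E k)"
  by (auto simp: sym_def CIS_rel_def CIS_adj_def Int_commute)

lemma CIS_rel_exchange:
  assumes "A \<in> CIS_set V E k" "finite A" "p \<in> A" "v \<in> V - A"
    and "induced_connected E (insert v (A - {p}))"
  shows "(A, insert v (A - {p})) \<in> CIS_rel V E k"
proof -
  have A: "A \<subseteq> V" "card A = k" using assms(1) by (simp_all add: mem_CIS_set)
  have card_rem: "card (A - {p}) = k - 1" using A(2) assms(2,3) by simp
  have "card (insert v (A - {p})) = k"
    using card_rem assms(2-4) A(2) card_gt_0_iff[of A] by auto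
  then have "insert v (A - {p}) \<in> CIS_set V E k"
    using A(1) assms(4,5) by (auto simp: mem_CIS_set)
  moreover have "A \<inter> insert v (A - {p}) = A - {p}" using assms(4) by blast
  ultimately show ?thesis
    using assms(1,4) card_rem by (auto simp: CIS_rel_def CIS_adj_def)
qed

lemma CIS_rel_exchange_outside:
  assumes "A \<in> CIS_set V E k" "finite A" "induced_connected E Q" "Q \<subset> A"
    and "q \<in> Q" "v \<in> V - A" "{q, v} \<in> E"
  obtains p where "p \<in> A - Q" "(A, insert v (A - {p})) \<in> CIS_rel V E k"
proof -
  have "induced_connected E A" using assms(1) by (simp add: mem_CIS_set)
  then obtain p where p: "p \<in> A - Q" "induced_connected E (A - {p})"
    using exists_non_cut_vertex[OF assms(2) _ assms(3,4)] by blast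
  have "q \<in> A - {p}" using assms(4,5) p(1) by blast
  then have "induced_connected E (insert v (A - {p}))"
    by (rule induced_connected_insert[OF p(2) _ assms(7)])
  then have "(A, insert v (A - {p})) \<in> CIS_rel V E k"
    using p(1) by (intro CIS_rel_exchange[OF assms(1,2) _ assms(6)]) auto
  with p(1) show thesis by (rule that)
qed

lemma CIS_core_grow_step:
  assumes "finite U" "U \<subseteq> V" "induced_connected E (U - {w})" "k < card U"
    and "A \<in> CIS_set V E k" "A \<subseteq> U" "w \<in> A" "Q \<subseteq> A - {w}" "induced_connected E Q"
  obtains v A1 where "v \<notin> Q" "insert v Q \<subseteq> A1 - {w}" "induced_connected E (insert v Q)"
    and "A1 \<in> CIS_set V E k" "A1 \<subseteq> U" "(A, A1) \<in> (CIS_rel V E k)\<^sup>*"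
proof -
  have finA: "finite A" using assms(6,1) by (rule finite_subset)
  have "w \<in> U" using assms(6,7) by blast
  have "card (A - {w}) = card A - 1" "card (U - {w}) = card U - 1" "0 < card A"
    using finA assms(1,7) \<open>w \<in> U\<close> by (auto simp: card_gt_0_iff)
  moreover have "card A = k" using assms(5) by (simp add: mem_CIS_set)
  ultimately have "card (A - {w}) < card (U - {w})" using assms(4) by linarith
  have "card Q \<le> card (A - {w})" using assms(8) finA by (intro card_mono) auto
  also have "\<dots> < card (U - {w})" by fact
  finally have "Q \<noteq> U - {w}" by blast
  then obtain b where b: "b \<in> (U - {w}) - Q" using assms(6,8) by blast
  obtain a where a: "a \<in> Q" using assms(9) by (auto simp: induced_connected_def)
  have "Q \<subseteq> U - {w}" using assms(6,8) by blast
  then obtain q v where qv: "q \<in> Q" "v \<in> (U - {w}) - Q" "{q, v} \<in> E"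
    using a b by (rule induced_connected_exit_edge[OF assms(3)])
  have core: "induced_connected E (insert v Q)"
    by (rule induced_connected_insert[OF assms(9) qv(1,3)])
  show thesis
  proof (cases "v \<in> A")
    case True
    then have "insert v Q \<subseteq> A - {w}" using qv(2) assms(8) by blast
    with that qv(2) core assms(5,6) show thesis by blast
  next
    case False
    have "Q \<subset> A" using assms(7,8) by blast
    moreover have "v \<in> V - A" using qv(2) False assms(2) by blast
    ultimately obtain p where p: "p \<in> A - Q"
      and exchange: "(A, insert v (A - {p})) \<in> CIS_rel V E k"
      by (rule CIS_rel_exchange_outside[OF assms(5) finA assms(9) _ qv(1) _ qv(3)])
    have "insert v Q \<subseteq> insert v (A - {p}) - {w}" using qv(2) assms(8) p by blast
    moreover have "insert v (A - {p}) \<in> CIS_set V E k" using exchange by (simp add: CIS_rel_def)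
    moreover have "insert v (A - {p}) \<subseteq> U" using qv(2) assms(6) by blast
    ultimately show thesis using that qv(2) core exchange by blast
  qed
qed

lemma CIS_reach_avoiding_vertex_core:
  assumes "finite U" "U \<subseteq> V" "induced_connected E (U - {w})" "k < card U"
    and "A \<in> CIS_set V E k" "A \<subseteq> U" "Q \<subseteq> A - {w}" "induced_connected E Q"
  shows "\<exists>A'\<in>CIS_set V E k. A' \<subseteq> U - {w} \<and> (A, A') \<in> (CIS_rel V E k)\<^sup>*"
  using assms(5-8)
proof (induction "k - card Q" arbitrary: A Q rule: less_induct)
  case less
  show ?case
  proof (cases "w \<in> A")
    case True
    obtain v A1 where v: "v \<notin> Q" "insert v Q \<subseteq> A1 - {w}" "induced_connected E (insert v Q)"
      and A1: "A1 \<in> CIS_set V E k" "A1 \<subseteq> U" "(A, A1) \<in> (CIS_rel V E k)\<^sup>*"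
      by (rule CIS_core_grow_step[OF assms(1-4) less.prems(1,2) True less.prems(3,4)])
    have "finite A1" using A1(2) assms(1) by (rule finite_subset)
    then have "card (insert v Q) \<le> card (A1 - {w})" using v(2) by (intro card_mono) auto
    also have "\<dots> \<le> k" using A1(1) by (simp add: mem_CIS_set card_Diff_singleton_if)
    finally have "k - card (insert v Q) < k - card Q"
      using v(1) \<open>finite A1\<close> v(2) finite_subset by fastforce
    then obtain A' where "A' \<in> CIS_set V E k" "A' \<subseteq> U - {w}" "(A1, A') \<in> (CIS_rel V E k)\<^sup>*"
      using less.hyps[OF _ A1(1,2) _ v(3)] v(2) by blast
    with A1(3) show ?thesis by (blast intro: rtrancl_trans)
  next
    case False
    then have "A \<subseteq> U - {w}" using less.prems(2) by blast
    then show ?thesis using less.prems(1) by blast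
  qed
qed

lemma CIS_reach_avoiding_vertex:
  assumes "finite U" "U \<subseteq> V" "induced_connected E (U - {w})" "2 \<le> k" "k < card U"
    and "A \<in> CIS_set V E k" "A \<subseteq> U"
  shows "\<exists>A'\<in>CIS_set V E k. A' \<subseteq> U - {w} \<and> (A, A') \<in> (CIS_rel V E k)\<^sup>*"
proof -
  have "\<not> A \<subseteq> {w}"
  proof
    assume "A \<subseteq> {w}"
    then have "card A \<le> 1" using card_mono[of "{w}" A] by simp
    with assms(4,6) show False by (simp add: mem_CIS_set)
  qed
  then obtain a where "a \<in> A - {w}" by blast
  then show ?thesis
    by (intro CIS_reach_avoiding_vertex_core[OF assms(1,2,3,5,6,7) _ induced_connected_singleton]) simp
qed

lemma CIS_reach_within:
  assumes "finite U" "U \<subseteq> V" "induced_connected E U" "2 \<le> k" "k \<le> card U"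
    and "A \<in> CIS_set V E k" "A \<subseteq> U" "B \<in> CIS_set V E k" "B \<subseteq> U"
  shows "(A, B) \<in> (CIS_rel V E k)\<^sup>*"
  using assms
proof (induction "card U" arbitrary: U A B rule: less_induct)
  case less
  show ?case
  proof (cases "card U = k")
    case True
    have "A = U" "B = U"
      using card_subset_eq[OF less.prems(1) less.prems(7)] card_subset_eq[OF less.prems(1) less.prems(9)]
        less.prems(6,8) True by (simp_all add: mem_CIS_set)
    then show ?thesis by simp
  next
    case False
    then have kU: "k < card U" using less.prems(5) by simp
    obtain x where x: "x \<in> U" using less.prems(3) by (auto simp: induced_connected_def)
    have "U \<noteq> {x}" using kU less.prems(4) by auto
    with x have "{x} \<subset> U" by blast
    then obtain u where u: "u \<in> U" "induced_connected E (U - {u})"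
      using exists_non_cut_vertex[OF less.prems(1,3) induced_connected_singleton] by blast
    obtain A' where A': "A' \<in> CIS_set V E k" "A' \<subseteq> U - {u}" "(A, A') \<in> (CIS_rel V E k)\<^sup>*"
      using CIS_reach_avoiding_vertex[OF less.prems(1,2) u(2) less.prems(4) kU less.prems(6,7)] by blast
    obtain B' where B': "B' \<in> CIS_set V E k" "B' \<subseteq> U - {u}" "(B, B') \<in> (CIS_rel V E k)\<^sup>*"
      using CIS_reach_avoiding_vertex[OF less.prems(1,2) u(2) less.prems(4) kU less.prems(8,9)] by blast
    have "card (U - {u}) < card U" "k \<le> card (U - {u})"
      using u(1) kU less.prems(1) by (simp_all add: card_Diff1_less)
    moreover have "finite (U - {u})" "U - {u} \<subseteq> V" using less.prems(1,2) by auto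
    ultimately have "(A', B') \<in> (CIS_rel V E k)\<^sup>*"
      using u(2) less.prems(4) A'(1,2) B'(1,2) by (intro less.hyps) auto
    moreover have "(B', B) \<in> (CIS_rel V E k)\<^sup>*"
      using sym_rtrancl[OF sym_CIS_rel] B'(3) by (rule symD)
    ultimately show ?thesis using A'(3) by (blast intro: rtrancl_trans)
  qed
qed

theorem theorem1:
  fixes V :: "'a set" and E :: "'a set set" and k :: nat
  assumes "finite V"
    and "simple_graph V E"
    and "graph_connected V E"
    and "2 \<le> k" and "k < card V"
  shows "connected_rel (CIS_set V E k) (CIS_adj k)"
proof -
  have V_conn: "induced_connected E V"
    using assms(3) by (simp add: graph_connected_iff_induced_connected)
  have "\<exists>S\<subseteq>V. induced_connected E S \<and> card S = k"
    using assms(4,5) by (intro exists_induced_connected_subset_card[OF assms(1) V_conn]) simp_all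
  then have "CIS_set V E k \<noteq> {}" by (auto simp: mem_CIS_set)
  moreover have "(A, B) \<in> (CIS_rel V E k)\<^sup>*" if "A \<in> CIS_set V E k" "B \<in> CIS_set V E k" for A B
    using that assms(5)
    by (intro CIS_reach_within[OF assms(1) order_refl V_conn assms(4) _ that(1) _ that(2)])
      (simp_all add: mem_CIS_set)
  ultimately show ?thesis
    unfolding connected_rel_def by (simp add: CIS_rel_def)
qed

end
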